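(* There is an absolute constant $C>0$ such that for every $\varepsilon\in(0,1/3]$ and every integer $d\ge\log_2(1/\varepsilon)$, there exist an integer $k\le d$ and a monotone function $f:\{\pm1\}^k\to\{\pm1\}$ such that, for $\mathbf x$ uniform on $\{\pm1\}^k$, $$\min_{b\in\{\pm1\}}\Pr[f(\mathbf x)=b]\ge\varepsilon$$ and $$\mathbb E[\mathbf x_1f(\mathbf x)]=\cdots=\mathbb E[\mathbf x_kf(\mathbf x)]\le C\,\varepsilon\log(1/\varepsilon)\cdot\frac{\log d}{d}.$$
   Context: A function $f:\{\pm1\}^k\to\{\pm1\}$ is monotone if $f(x)\le f(y)$ whenever $x_i\le y_i$ for all $i$. *)

theory Defs
  imports Complex_Main
begin

definition cube :: "nat \<Rightarrow> real list set" where
  "cube k = {x. length x = k \<and> set x \<subseteq> {-1, 1}}"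

definition boolean_fun :: "nat \<Rightarrow> (real list \<Rightarrow> real) \<Rightarrow> bool" where
  "boolean_fun k f \<longleftrightarrow> (\<forall>x\<in>cube k. f x \<in> {-1, 1})"

definition monotone_bool :: "nat \<Rightarrow> (real list \<Rightarrow> real) \<Rightarrow> bool" where
  "monotone_bool k f \<longleftrightarrow>
     (\<forall>x\<in>cube k. \<forall>y\<in>cube k. (\<forall>i<k. x ! i \<le> y ! i) \<longrightarrow> f x \<le> f y)"

definition unif_prob :: "nat \<Rightarrow> (real list \<Rightarrow> bool) \<Rightarrow> real" where
  "unif_prob k P = real (card {x\<in>cube k. P x}) / 2 ^ k"

definition unif_exp :: "nat \<Rightarrow> (real list \<Rightarrow> real) \<Rightarrow> real" where
  "unif_exp k g = (\<Sum>x\<in>cube k. g x) / 2 ^ k"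

end

theory Submission
  imports Defs
begin

text \<open>
  The example is the tribes function: split the k = m w coordinates into m blocks of width w and
  let f(x) = 1 iff some block consists of ones only. Since the blocks are independent, sums over
  the cube of products of block functions factor, giving Pr[f = -1] = (1 - 2^-w)^m and
  E[x_i f] = 2^(1-w) (1 - 2^-w)^(m-1), where only the block containing i contributes a
  non-trivial factor. Choosing w maximal with roughly 2 \<epsilon> 2^w w \<le> d, and then m as small as possible with
  (1 - 2^-w)^m \<le> 1 - \<epsilon>, makes both values of f have probability at least \<epsilon>, while
  2^(-w) = O(\<epsilon> w / d) = O(\<epsilon> log(1/\<epsilon>) log d / d).
\<close>

lemma cube_0: "cube 0 = {[]}"
  by (auto simp: cube_def)

lemma cube_Suc: "cube (Suc n) = Cons (-1) ` cube n \<union> Cons 1 ` cube n"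
  by (auto simp: cube_def length_Suc_conv)

lemma finite_cube [simp]: "finite (cube n)"
  by (induction n) (auto simp: cube_0 cube_Suc)

lemma replicate_one_in_cube: "replicate n 1 \<in> cube n"
  by (auto simp: cube_def)

lemma sum_cube_Suc: "sum g (cube (Suc n)) = (\<Sum>ys\<in>cube n. g (-1 # ys) + g (1 # ys))"
proof -
  have "sum g (cube (Suc n)) = sum g (Cons (-1) ` cube n) + sum g (Cons 1 ` cube n)"
    unfolding cube_Suc by (rule sum.union_disjoint) auto
  also have "\<dots> = (\<Sum>ys\<in>cube n. g (-1 # ys)) + (\<Sum>ys\<in>cube n. g (1 # ys))"
    by (simp add: sum.reindex)
  finally show ?thesis
    by (simp add: sum.distrib)
qed

lemma card_cube: "real (card (cube n)) = 2 ^ n"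
proof (induction n)
  case 0
  then show ?case by (simp add: cube_0)
next
  case (Suc n)
  have "real (card (cube (Suc n))) = (\<Sum>ys\<in>cube n. 2)"
    by (simp only: real_of_card sum_cube_Suc) simp
  then show ?case
    using Suc by simp
qed

lemma sum_cube_add:
  "sum g (cube (a + b)) = (\<Sum>xs\<in>cube a. \<Sum>ys\<in>cube b. g (xs @ ys))"
proof (induction a arbitrary: g)
  case 0
  then show ?case by (simp add: cube_0)
next
  case (Suc a)
  have "sum g (cube (Suc a + b)) = (\<Sum>zs\<in>cube (a + b). g (-1 # zs) + g (1 # zs))"
    using sum_cube_Suc[of g "a + b"] by simp
  also have "\<dots> = (\<Sum>xs\<in>cube a. \<Sum>ys\<in>cube b. g (-1 # xs @ ys) + g (1 # xs @ ys))"
    using Suc[of "\<lambda>zs. g (-1 # zs) + g (1 # zs)"] by simp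
  also have "\<dots> = (\<Sum>xs\<in>cube (Suc a). \<Sum>ys\<in>cube b. g (xs @ ys))"
    by (subst sum_cube_Suc) (simp add: sum.distrib)
  finally show ?case .
qed

lemma sum_cube_nth: "i < n \<Longrightarrow> (\<Sum>x\<in>cube n. x ! i) = 0"
proof (induction n arbitrary: i)
  case 0
  then show ?case by simp
next
  case (Suc n)
  then show ?case
    by (cases i) (simp_all add: sum_cube_Suc sum_distrib_left[symmetric])
qed

lemma unif_prob_eq_unif_exp: "unif_prob k P = unif_exp k (\<lambda>x. if P x then 1 else 0)"
  by (simp add: unif_prob_def unif_exp_def sum.If_cases Collect_conj_eq)

definition block :: "nat \<Rightarrow> nat \<Rightarrow> real list \<Rightarrow> real list" where
  "block w j x = take w (drop (j * w) x)"

lemma block_index_le: "j < m \<Longrightarrow> j * w + w \<le> m * (w::nat)"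
  using mult_le_mono1[of "Suc j" m w] by simp

lemma length_block: "length x = m * w \<Longrightarrow> j < m \<Longrightarrow> length (block w j x) = w"
  using block_index_le[of j m w] by (simp add: block_def)

lemma nth_block:
  "length x = m * w \<Longrightarrow> j < m \<Longrightarrow> t < w \<Longrightarrow> block w j x ! t = x ! (j * w + t)"
  using block_index_le[of j m w] by (simp add: block_def)

lemma sum_cube_prod_blocks:
  fixes g :: "nat \<Rightarrow> real list \<Rightarrow> real"
  shows "(\<Sum>x\<in>cube (m * w). \<Prod>j<m. g j (block w j x)) = (\<Prod>j<m. \<Sum>y\<in>cube w. g j y)"
proof (induction m arbitrary: g)
  case 0
  then show ?case by (simp add: cube_0)
next
  case (Suc m)
  have split_blocks: "(\<Prod>j<Suc m. g j (block w j (xs @ ys)))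
      = g 0 xs * (\<Prod>j<m. g (Suc j) (block w j ys))" if "xs \<in> cube w" for xs ys
  proof -
    have "length xs = w"
      using that by (simp add: cube_def)
    then have "block w 0 (xs @ ys) = xs" and "\<And>j. block w (Suc j) (xs @ ys) = block w j ys"
      by (simp_all add: block_def add.commute)
    then show ?thesis
      by (simp only: prod.lessThan_Suc_shift)
  qed
  have "(\<Sum>x\<in>cube (Suc m * w). \<Prod>j<Suc m. g j (block w j x))
      = (\<Sum>xs\<in>cube w. \<Sum>ys\<in>cube (m * w). g 0 xs * (\<Prod>j<m. g (Suc j) (block w j ys)))"
    using sum_cube_add[of "\<lambda>x. \<Prod>j<Suc m. g j (block w j x)" w "m * w"] split_blocks by simp
  also have "\<dots> = (\<Sum>xs\<in>cube w. g 0 xs) * (\<Prod>j<m. \<Sum>y\<in>cube w. g (Suc j) y)"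
    using Suc[of "\<lambda>j. g (Suc j)"] by (simp add: sum_distrib_left[symmetric] sum_distrib_right)
  also have "\<dots> = (\<Prod>j<Suc m. \<Sum>y\<in>cube w. g j y)"
    by (simp only: prod.lessThan_Suc_shift)
  finally show ?case .
qed

subsection \<open>The tribes function\<close>

definition all_ones :: "nat \<Rightarrow> real list \<Rightarrow> real" where
  "all_ones w y = (if y = replicate w 1 then 1 else 0)"

definition no_unanimous_tribe :: "nat \<Rightarrow> nat \<Rightarrow> real list \<Rightarrow> real" where
  "no_unanimous_tribe m w x = (\<Prod>j<m. 1 - all_ones w (block w j x))"

definition tribes :: "nat \<Rightarrow> nat \<Rightarrow> real list \<Rightarrow> real" where
  "tribes m w x = 1 - 2 * no_unanimous_tribe m w x"

lemma sum_all_ones: "(\<Sum>y\<in>cube w. all_ones w y) = 1"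
  using replicate_one_in_cube[of w] by (simp add: all_ones_def sum.delta)

lemma sum_not_all_ones: "(\<Sum>y\<in>cube w. 1 - all_ones w y) = 2 ^ w - 1"
  by (simp add: sum_subtractf card_cube sum_all_ones)

lemma sum_nth_mult_all_ones: "t < w \<Longrightarrow> (\<Sum>y\<in>cube w. y ! t * all_ones w y) = 1"
  using replicate_one_in_cube[of w] by (simp add: all_ones_def if_distrib sum.delta cong: if_cong)

lemma no_unanimous_tribe_01: "no_unanimous_tribe m w x \<in> {0, 1}"
  unfolding no_unanimous_tribe_def by (induction m) (auto simp: all_ones_def)

lemma sum_no_unanimous_tribe: "(\<Sum>x\<in>cube (m * w). no_unanimous_tribe m w x) = (2 ^ w - 1) ^ m"
  using sum_cube_prod_blocks[of "\<lambda>_ y. 1 - all_ones w y" w m]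
  by (simp add: no_unanimous_tribe_def sum_not_all_ones)

lemma sum_nth_mult_no_unanimous_tribe:
  assumes i: "i < m * w"
  shows "(\<Sum>x\<in>cube (m * w). x ! i * no_unanimous_tribe m w x) = - ((2 ^ w - 1) ^ (m - 1))"
proof -
  define j0 where "j0 = i div w"
  define t where "t = i mod w"
  have "w > 0"
    using i by (cases w) auto
  then have j0: "j0 < m" and t: "t < w" and i_eq: "i = j0 * w + t"
    using i by (simp_all add: j0_def t_def less_mult_imp_div_less)
  define h where "h j = (if j = j0 then (\<lambda>y. y ! t * (1 - all_ones w y)) else (\<lambda>y. 1 - all_ones w y))"
    for j
  have "x ! i * no_unanimous_tribe m w x = (\<Prod>j<m. h j (block w j x))" if "x \<in> cube (m * w)" for x
  proof -
    have "(\<Prod>j\<in>{..<m} - {j0}. h j (block w j x))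
        = (\<Prod>j\<in>{..<m} - {j0}. 1 - all_ones w (block w j x))"
      by (rule prod.cong) (auto simp: h_def)
    moreover have "x ! i = block w j0 x ! t"
      using that j0 t i_eq by (simp add: cube_def nth_block)
    ultimately show ?thesis
      using j0 by (simp add: no_unanimous_tribe_def h_def prod.remove)
  qed
  then have "(\<Sum>x\<in>cube (m * w). x ! i * no_unanimous_tribe m w x) = (\<Prod>j<m. \<Sum>y\<in>cube w. h j y)"
    using sum_cube_prod_blocks[of h w m] by (simp cong: sum.cong)
  also have "\<dots> = (\<Sum>y\<in>cube w. h j0 y) * (\<Prod>j\<in>{..<m} - {j0}. \<Sum>y\<in>cube w. h j y)"
    using j0 by (simp add: prod.remove)
  also have "(\<Sum>y\<in>cube w. h j0 y) = -1"
    using sum_cube_nth[OF t] sum_nth_mult_all_ones[OF t]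
    by (simp add: h_def algebra_simps sum_subtractf)
  also have "(\<Prod>j\<in>{..<m} - {j0}. \<Sum>y\<in>cube w. h j y) = (2 ^ w - 1) ^ (m - 1)"
    using j0 by (simp add: h_def sum_not_all_ones)
  finally show ?thesis
    by simp
qed

lemma block_all_ones_mono:
  assumes x: "x \<in> cube (m * w)" and y: "y \<in> cube (m * w)" and le: "\<forall>i<m * w. x ! i \<le> y ! i"
    and j: "j < m" and ones: "block w j x = replicate w 1"
  shows "block w j y = replicate w 1"
proof (rule nth_equalityI)
  have lx: "length x = m * w" and ly: "length y = m * w" and sy: "set y \<subseteq> {-1, 1}"
    using x y by (auto simp: cube_def)
  show "length (block w j y) = length (replicate w 1)"
    using length_block[OF ly j] by simp
  fix t
  assume "t < length (block w j y)"
  then have t: "t < w"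
    using length_block[OF ly j] by simp
  have idx: "j * w + t < m * w"
    using block_index_le[OF j, of w] t by simp
  have "x ! (j * w + t) = 1"
    using ones nth_block[OF lx j t] t by simp
  moreover have "x ! (j * w + t) \<le> y ! (j * w + t)"
    using le idx by blast
  moreover have "y ! (j * w + t) \<in> {-1, 1}"
    using idx ly sy by (metis nth_mem subsetD)
  ultimately show "block w j y ! t = replicate w 1 ! t"
    using nth_block[OF ly j t] t by auto
qed

lemma no_unanimous_tribe_antimono:
  assumes "x \<in> cube (m * w)" "y \<in> cube (m * w)" "\<forall>i<m * w. x ! i \<le> y ! i"
  shows "no_unanimous_tribe m w y \<le> no_unanimous_tribe m w x"
  unfolding no_unanimous_tribe_def
proof (rule prod_mono)
  fix j
  assume "j \<in> {..<m}"
  then show "0 \<le> 1 - all_ones w (block w j y) \<and> 1 - all_ones w (block w j y) \<le> 1 - all_ones w (block w j x)"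
    using block_all_ones_mono[OF assms] by (auto simp: all_ones_def)
qed

lemma boolean_fun_tribes: "boolean_fun (m * w) (tribes m w)"
  using no_unanimous_tribe_01 by (fastforce simp: boolean_fun_def tribes_def)

lemma monotone_bool_tribes: "monotone_bool (m * w) (tribes m w)"
  using no_unanimous_tribe_antimono by (fastforce simp: monotone_bool_def tribes_def)

lemma two_power_mult: "(2::real) ^ (m * w) = (2 ^ w) ^ m"
  by (metis power_mult mult.commute)

lemma unif_prob_tribes_neg: "unif_prob (m * w) (\<lambda>x. tribes m w x = -1) = (1 - 1 / 2 ^ w) ^ m"
proof -
  have "(if tribes m w x = -1 then 1 else 0) = no_unanimous_tribe m w x" for x
    using no_unanimous_tribe_01[of m w x] by (auto simp: tribes_def)
  then have "unif_prob (m * w) (\<lambda>x. tribes m w x = -1) = (2 ^ w - 1) ^ m / (2 ^ w) ^ m"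
    by (simp add: unif_prob_eq_unif_exp unif_exp_def sum_no_unanimous_tribe two_power_mult)
  also have "\<dots> = (1 - 1 / 2 ^ w) ^ m"
    by (simp add: power_divide[symmetric] diff_divide_distrib)
  finally show ?thesis .
qed

lemma unif_prob_tribes_pos: "unif_prob (m * w) (\<lambda>x. tribes m w x = 1) = 1 - (1 - 1 / 2 ^ w) ^ m"
proof -
  have "(if tribes m w x = 1 then 1 else 0) = 1 - (if tribes m w x = -1 then 1 else 0 :: real)" for x
    using no_unanimous_tribe_01[of m w x] by (auto simp: tribes_def)
  then have "unif_prob (m * w) (\<lambda>x. tribes m w x = 1) = 1 - unif_prob (m * w) (\<lambda>x. tribes m w x = -1)"
    by (simp add: unif_prob_eq_unif_exp unif_exp_def sum_subtractf card_cube diff_divide_distrib)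
  then show ?thesis
    by (simp add: unif_prob_tribes_neg)
qed

lemma unif_exp_nth_mult_tribes:
  assumes "i < m * w"
  shows "unif_exp (m * w) (\<lambda>x. x ! i * tribes m w x) = 2 / 2 ^ w * (1 - 1 / 2 ^ w) ^ (m - 1)"
proof -
  obtain n where m: "m = Suc n"
    using assms by (cases m) auto
  have "(\<Sum>x\<in>cube (m * w). x ! i * tribes m w x)
      = (\<Sum>x\<in>cube (m * w). x ! i) - 2 * (\<Sum>x\<in>cube (m * w). x ! i * no_unanimous_tribe m w x)"
    by (simp add: tribes_def algebra_simps sum_subtractf sum_distrib_left)
  also have "\<dots> = 2 * (2 ^ w - 1) ^ (m - 1)"
    using sum_cube_nth[OF assms] sum_nth_mult_no_unanimous_tribe[OF assms] by simp
  finally have "unif_exp (m * w) (\<lambda>x. x ! i * tribes m w x) = 2 * (2 ^ w - 1) ^ (m - 1) / (2 ^ w) ^ m"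
    by (simp add: unif_exp_def two_power_mult)
  also have "\<dots> = 2 / 2 ^ w * ((2 ^ w - 1) / 2 ^ w) ^ (m - 1)"
    unfolding m by (simp add: power_divide)
  also have "(2 ^ w - 1) / 2 ^ w = (1 - 1 / 2 ^ w :: real)"
    by (simp add: field_simps)
  finally show ?thesis .
qed

subsection \<open>Choice of the parameters\<close>

lemma one_minus_inverse_le_ln: "0 < x \<Longrightarrow> 1 - 1 / x \<le> ln (x::real)"
  using ln_le_minus_one[of "1 / x"] by (simp add: ln_div)

lemma two_le_of_inverse_le_two_power:
  fixes \<epsilon> :: real
  assumes "0 < \<epsilon>" "\<epsilon> \<le> 1/3" "1 / \<epsilon> \<le> 2 ^ d"
  shows "2 \<le> d"
proof -
  have "3 \<le> 1 / \<epsilon>"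
    using assms(1,2) by (simp add: field_simps)
  then have "(3::real) \<le> 2 ^ d"
    using assms(3) by linarith
  then show ?thesis
    by (cases d; cases "d - 1") auto
qed

lemma one_minus_inverse_power_le:
  fixes N \<epsilon> :: real
  assumes "1 \<le> N" "0 \<le> \<epsilon>" "\<epsilon> \<le> 1/2" "2 * \<epsilon> * N \<le> M"
  shows "(1 - 1 / N) ^ M \<le> 1 - \<epsilon>"
proof -
  \<comment> \<open>Bernoulli applied to (1 + 1/N)^M, using (1 - 1/N)(1 + 1/N) \<le> 1.\<close>
  have "(1 - 1 / N) ^ M * (1 + 1 / N) ^ M = (1 - 1 / N\<^sup>2) ^ M"
    by (simp add: power_mult_distrib[symmetric] algebra_simps power2_eq_square)
  also have "\<dots> \<le> 1"
    using assms(1) by (intro power_le_one) (auto simp: field_simps)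
  finally have prod_le: "(1 - 1 / N) ^ M * (1 + 1 / N) ^ M \<le> 1" .
  have "1 + 2 * \<epsilon> \<le> 1 + M * (1 / N)"
    using assms(1,4) by (simp add: field_simps)
  also have "\<dots> \<le> (1 + 1 / N) ^ M"
    using assms(1) by (intro Bernoulli_inequality) (simp add: order_trans[of _ 0])
  moreover have "0 \<le> (1 - 1 / N) ^ M"
    using assms(1) by simp
  ultimately have "(1 - 1 / N) ^ M * (1 + 2 * \<epsilon>) \<le> 1"
    using prod_le by (meson mult_left_mono order_trans)
  also have "1 \<le> (1 - \<epsilon>) * (1 + 2 * \<epsilon>)"
    using mult_nonneg_nonneg[of \<epsilon> "1 - 2 * \<epsilon>"] assms(2,3) by (simp add: algebra_simps)
  finally show ?thesis
    using assms(2) by simp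
qed

lemma power_between:
  fixes r \<epsilon> :: real
  assumes "1/2 \<le> r" "0 < \<epsilon>" "\<epsilon> \<le> 1/3" "r ^ M \<le> 1 - \<epsilon>"
  obtains m where "1 \<le> m" "m \<le> M" "\<epsilon> \<le> r ^ m" "r ^ m \<le> 1 - \<epsilon>"
proof -
  define m where "m = (LEAST m. r ^ m \<le> 1 - \<epsilon>)"
  have le: "r ^ m \<le> 1 - \<epsilon>" and "m \<le> M"
    unfolding m_def using assms(4) by (auto intro: LeastI Least_le)
  have "m \<noteq> 0"
  proof
    assume "m = 0"
    with le assms(2) show False
      by simp
  qed
  then obtain n where m: "m = Suc n"
    using not0_implies_Suc by blast
  have "1 - \<epsilon> < r ^ n"
    using not_less_Least[of n "\<lambda>m. r ^ m \<le> 1 - \<epsilon>"] m by (simp add: m_def)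
  then have "1/2 * (1 - \<epsilon>) \<le> r * r ^ n"
    using assms(1,3) by (intro mult_mono) auto
  then have "\<epsilon> \<le> r ^ m"
    using assms(3) by (simp add: m)
  moreover have "1 \<le> m"
    using m by simp
  ultimately show ?thesis
    using that \<open>m \<le> M\<close> le by blast
qed

lemma tribes_width_exists:
  fixes \<epsilon> :: real
  assumes e0: "0 < \<epsilon>" and e3: "\<epsilon> \<le> 1/3" and d: "1 / \<epsilon> \<le> 2 ^ d"
  obtains w M :: nat where "1 \<le> w" "2 * \<epsilon> * 2 ^ w \<le> M" "M * w \<le> d"
    "real d < 8 * \<epsilon> * 2 ^ w * (real w + 1)"
proof -
  define M where "M w = nat \<lceil>2 * \<epsilon> * 2 ^ w\<rceil>" for w :: nat
  have pos: "0 < 2 * \<epsilon> * 2 ^ w" for w :: nat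
    using e0 by simp
  have M_ge: "2 * \<epsilon> * 2 ^ w \<le> M w" and M_less: "M w < 2 * \<epsilon> * 2 ^ w + 1"
    and M_pos: "1 \<le> M w" for w
    using pos[of w] unfolding M_def by linarith+
  define W where "W = {w. 1 \<le> w \<and> M w * w \<le> d}"
  have W_bounded: "W \<subseteq> {..d}"
    using M_pos by (auto simp: W_def) (metis le_trans mult_le_mono1 mult_1 One_nat_def)
  have "M 1 \<le> 2"
    using e3 unfolding M_def by (simp add: ceiling_le_iff nat_le_iff)
  then have "1 \<in> W"
    using two_le_of_inverse_le_two_power[OF e0 e3 d] by (simp add: W_def)
  \<comment> \<open>M w tribes of width w already push Pr[f = -1] below 1 - \<epsilon>; take the widest that fit.\<close>
  define w where "w = Max W"
  have "w \<in> W"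
    unfolding w_def using W_bounded \<open>1 \<in> W\<close> by (auto intro: Max_in finite_subset)
  then have w1: "1 \<le> w" and wd: "M w * w \<le> d"
    by (simp_all add: W_def)
  have "Suc w \<notin> W"
    using W_bounded w_def by (metis Max_ge Suc_n_not_le_n finite_atMost finite_subset)
  then have "d < M (Suc w) * Suc w"
    using w1 by (simp add: W_def)
  then have "real d < real (M (Suc w) * Suc w)"
    by (simp only: of_nat_less_iff)
  then have d_less: "real d < real (M (Suc w)) * (real w + 1)"
    by (simp add: algebra_simps)
  \<comment> \<open>Otherwise M (w + 1) = 1, so w + 1 \<notin> W forces w = d, and then \<epsilon> 2^w \<ge> 1.\<close>
  have large: "1 \<le> 4 * \<epsilon> * 2 ^ w"
  proof (rule ccontr)
    assume small: "\<not> 1 \<le> 4 * \<epsilon> * 2 ^ w"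
    then have "real (M (Suc w)) < 2"
      using M_less[of "Suc w"] by simp
    then have "M (Suc w) = 1"
      using M_pos[of "Suc w"] by linarith
    then have "w = d"
      using d_less \<open>w \<in> W\<close> W_bounded by auto
    then show False
      using small d e0 by (simp add: field_simps)
  qed
  have "real (M (Suc w)) \<le> 4 * \<epsilon> * 2 ^ w + 1"
    using M_less[of "Suc w"] by simp
  then have "real (M (Suc w)) * (real w + 1) \<le> (4 * \<epsilon> * 2 ^ w + 1) * (real w + 1)"
    by (rule mult_right_mono) simp
  with d_less have "real d < (4 * \<epsilon> * 2 ^ w + 1) * (real w + 1)"
    by (rule order_less_le_trans)
  also have "\<dots> \<le> 8 * \<epsilon> * 2 ^ w * (real w + 1)"
    using large by (intro mult_right_mono) simp_all
  finally show ?thesis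
    using that w1 M_ge wd by blast
qed

lemma width_le_log:
  fixes \<epsilon> :: real
  assumes e0: "0 < \<epsilon>" and e3: "\<epsilon> \<le> 1/3" and "2 \<le> d" and "2 * \<epsilon> * 2 ^ w \<le> real d"
  shows "real w + 1 \<le> 8 * ln (real d) * ln (1 / \<epsilon>)"
proof -
  define a b where "a = ln (real d)" and "b = ln (1 / \<epsilon>)"
  have "(2::real) ^ (w + 1) \<le> real d / \<epsilon>"
    using assms by (simp add: field_simps)
  then have "ln ((2::real) ^ (w + 1)) \<le> ln (real d / \<epsilon>)"
    using e0 \<open>2 \<le> d\<close> by (subst ln_le_cancel_iff) auto
  then have "(real w + 1) * ln 2 \<le> a + b"
    using e0 \<open>2 \<le> d\<close> by (simp add: a_def b_def ln_realpow ln_div ln_mult algebra_simps)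
  moreover have "(real w + 1) * (1/2) \<le> (real w + 1) * ln 2"
    using one_minus_inverse_le_ln[of 2] by (intro mult_left_mono) simp_all
  ultimately have "real w + 1 \<le> 2 * (a + b)"
    by argo
  moreover have "1/2 \<le> a"
  proof -
    have "1 / real d \<le> 1/2"
      using \<open>2 \<le> d\<close> by simp
    then show ?thesis
      using one_minus_inverse_le_ln[of "real d"] \<open>2 \<le> d\<close> unfolding a_def by linarith
  qed
  moreover have "2/3 \<le> b"
    using one_minus_inverse_le_ln[of "1 / \<epsilon>"] e0 e3 by (simp add: b_def)
  \<comment> \<open>4 a b - (a + b) = (2 a - 1)(2 b - 1) + (a + b - 1)\<close>
  moreover have "0 \<le> (2 * a - 1) * (2 * b - 1)"
    using calculation by simp
  ultimately show ?thesis
    by (simp add: a_def b_def algebra_simps)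
qed

lemma inverse_two_power_width_le:
  fixes \<epsilon> :: real
  assumes "0 < \<epsilon>" "\<epsilon> \<le> 1/3" "2 \<le> d"
    and "2 * \<epsilon> * 2 ^ w \<le> real d" "real d < 8 * \<epsilon> * 2 ^ w * (real w + 1)"
  shows "2 / 2 ^ w \<le> 128 * \<epsilon> * ln (1 / \<epsilon>) * (ln (real d) / real d)"
proof -
  have "2 / 2 ^ w \<le> 16 * \<epsilon> * (real w + 1) / real d"
    using assms(3,5) by (simp add: field_simps)
  also have "\<dots> \<le> 16 * \<epsilon> * (8 * ln (real d) * ln (1 / \<epsilon>)) / real d"
    using width_le_log[OF assms(1-4)] assms(1) by (intro divide_right_mono mult_left_mono) simp_all
  finally show ?thesis
    by (simp add: field_simps)
qed

lemma tribes_parameters: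
  fixes \<epsilon> :: real
  assumes e0: "0 < \<epsilon>" and e3: "\<epsilon> \<le> 1/3" and pow: "1 / \<epsilon> \<le> 2 ^ d"
  obtains m w :: nat where "0 < m * w" "m * w \<le> d"
    "\<epsilon> \<le> (1 - 1 / 2 ^ w) ^ m" "(1 - 1 / 2 ^ w) ^ m \<le> 1 - \<epsilon>"
    "2 / 2 ^ w * (1 - 1 / 2 ^ w) ^ (m - 1) \<le> 128 * \<epsilon> * ln (1 / \<epsilon>) * (ln (real d) / real d)"
proof -
  obtain w M :: nat where w1: "1 \<le> w" and M: "2 * \<epsilon> * 2 ^ w \<le> M" and Mw: "M * w \<le> d"
    and d_less: "real d < 8 * \<epsilon> * 2 ^ w * (real w + 1)"
    using tribes_width_exists[OF e0 e3 pow] .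
  have "(2::real) \<le> 2 ^ w"
    using power_increasing[OF w1, of "2::real"] by simp
  then have r_ge: "1/2 \<le> 1 - 1 / (2::real) ^ w" and r_le: "1 - 1 / (2::real) ^ w \<le> 1"
    by (simp_all add: field_simps)
  moreover have "(1 - 1 / 2 ^ w) ^ M \<le> 1 - \<epsilon>"
    using M e0 e3 by (intro one_minus_inverse_power_le) simp_all
  ultimately obtain m where "1 \<le> m" "m \<le> M"
    and probs: "\<epsilon> \<le> (1 - 1 / 2 ^ w) ^ m" "(1 - 1 / 2 ^ w) ^ m \<le> 1 - \<epsilon>"
    using power_between e0 e3 by blast
  have "M * 1 \<le> M * w"
    using w1 by (rule mult_le_mono2)
  with Mw have "M \<le> d"
    by (simp only: mult_1_right)
  then have "2 * \<epsilon> * 2 ^ w \<le> real d"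
    using M by linarith
  with d_less have "2 / 2 ^ w \<le> 128 * \<epsilon> * ln (1 / \<epsilon>) * (ln (real d) / real d)"
    using inverse_two_power_width_le two_le_of_inverse_le_two_power[OF e0 e3 pow] e0 e3 by blast
  moreover have "2 / 2 ^ w * (1 - 1 / 2 ^ w) ^ (m - 1) \<le> (2::real) / 2 ^ w"
    using r_ge r_le by (intro mult_left_le power_le_one) simp_all
  moreover have "m * w \<le> d"
    using \<open>m \<le> M\<close> Mw mult_le_mono1 order_trans by blast
  moreover have "0 < m * w"
    using \<open>1 \<le> m\<close> w1 by simp
  ultimately show ?thesis
    using that probs by (meson order_trans)
qed

theorem proposition4p5:
  shows "\<exists>C::real. C > 0 \<and>
    (\<forall>\<epsilon>::real. 0 < \<epsilon> \<and> \<epsilon> \<le> 1/3 \<longrightarrow>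
      (\<forall>d::nat. real d \<ge> log 2 (1/\<epsilon>) \<longrightarrow>
        (\<exists>k::nat. k \<le> d \<and>
          (\<exists>f :: real list \<Rightarrow> real.
             boolean_fun k f \<and> monotone_bool k f \<and>
             (\<forall>b\<in>{-1, 1::real}. unif_prob k (\<lambda>x. f x = b) \<ge> \<epsilon>) \<and>
             (\<forall>i<k. unif_exp k (\<lambda>x. x ! i * f x) = unif_exp k (\<lambda>x. x ! 0 * f x)) \<and>
             (\<forall>i<k. unif_exp k (\<lambda>x. x ! i * f x)
                     \<le> C * \<epsilon> * ln (1/\<epsilon>) * (ln (real d) / real d))))))"
proof (intro exI[of _ "128::real"] conjI allI impI)
  fix \<epsilon> :: real and d :: nat
  assume "0 < \<epsilon> \<and> \<epsilon> \<le> 1/3" and "log 2 (1/\<epsilon>) \<le> real d"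
  then have "0 < \<epsilon>" "\<epsilon> \<le> 1/3" "1/\<epsilon> \<le> 2 ^ d"
    by (auto simp: log_le_iff powr_realpow)
  then obtain m w where "0 < m * w" "m * w \<le> d"
    and "\<epsilon> \<le> (1 - 1 / 2 ^ w) ^ m" "(1 - 1 / 2 ^ w) ^ m \<le> 1 - \<epsilon>"
    and "2 / 2 ^ w * (1 - 1 / 2 ^ w) ^ (m - 1) \<le> 128 * \<epsilon> * ln (1/\<epsilon>) * (ln (real d) / real d)"
    by (rule tribes_parameters)
  then show "\<exists>k\<le>d. \<exists>f. boolean_fun k f \<and> monotone_bool k f \<and>
      (\<forall>b\<in>{-1, 1}. \<epsilon> \<le> unif_prob k (\<lambda>x. f x = b)) \<and>
      (\<forall>i<k. unif_exp k (\<lambda>x. x ! i * f x) = unif_exp k (\<lambda>x. x ! 0 * f x)) \<and>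
      (\<forall>i<k. unif_exp k (\<lambda>x. x ! i * f x) \<le> 128 * \<epsilon> * ln (1/\<epsilon>) * (ln (real d) / real d))"
    using boolean_fun_tribes[of m w] monotone_bool_tribes[of m w]
    by (intro exI[of _ "m * w"] conjI exI[of _ "tribes m w"])
      (auto simp: unif_prob_tribes_neg unif_prob_tribes_pos unif_exp_nth_mult_tribes)
qed simp

end
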